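(* Let $d$ be a positive integer, $q\geq 2$ an integer, and $x\in\mathbb{Z}$. Then $$\liminf_{N\to\infty}\frac{|\{n\in\mathbb{N}: n<N,\ u_q(n)+x\equiv 0\pmod d\}|}{N}\geq\frac{\varphi(d)}{dq}\left\lfloor\frac{q}{d}\right\rfloor,$$ where $\varphi$ is Euler's totient function.
   Context: For an integer $q\geq 2$ and $n\in\mathbb{N}$: $v_q(0)=0$ and, for $n>0$, $v_q(n)=\max\{k: q^k\mid n\}$; $w_q(n)=\sum_{i=0}^n v_q(i)$; $u_q(n)=\sum_{i=0}^n w_q(i)$. *)

theory Defs
  imports "HOL-Analysis.Analysis" "HOL-Number_Theory.Number_Theory"
begin

definition vq :: "nat \<Rightarrow> nat \<Rightarrow> nat" where
  "vq q n = (if n = 0 then 0 else (GREATEST k. q ^ k dvd n))"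

definition wq :: "nat \<Rightarrow> nat \<Rightarrow> nat" where
  "wq q n = (\<Sum>i=0..n. vq q i)"

definition uq :: "nat \<Rightarrow> nat \<Rightarrow> nat" where
  "uq q n = (\<Sum>i=0..n. wq q i)"

end

theory Submission
  imports Defs
begin

(* Split n = q m + r with r < q. Then u_q(q m + r) = u_q(q m) + r w_q(q m), so whenever w_q(q m) is
   prime to d, at least \<lfloor>q/d\<rfloor> of the q values of r solve u_q(n) + x \<equiv> 0 (mod d). It remains to see
   that w_q(q m) is prime to d for a proportion of at least \<phi>(d)/d of all m. For s < q^J one has
   w_q(q (q^J a + s)) = w_q(q s) + c_J(a) with c_J(a) = a (1 + q + ... + q^J) + w_q(a), and c_J(a)
   already runs through all residues mod d for a < q^2. Hence the least number \<mu>_J of s < q^J in a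
   residue class of w_q(q s) mod d satisfies \<mu>_{J+2} \<ge> q^J + (q^2 - d) \<mu>_J, which forces
   \<mu>_J / q^J \<rightarrow> 1/d. *)

lemma card_less_mult_eq_sum_blocks:
  fixes M L :: nat
  shows "card {s. s < M * L \<and> P s} = (\<Sum>b<M. card {s. s < L \<and> P (L * b + s)})"
proof (induction M)
  case (Suc M)
  let ?block = "(\<lambda>s. L * M + s) ` {s. s < L \<and> P (L * M + s)}"
  have "{s. s < Suc M * L \<and> P s} = {s. s < M * L \<and> P s} \<union> ?block"
  proof (intro equalityI subsetI)
    fix s assume s: "s \<in> {s. s < Suc M * L \<and> P s}"
    show "s \<in> {s. s < M * L \<and> P s} \<union> ?block"
    proof (cases "s < M * L")
      case False
      then have "s = L * M + (s - L * M)" "s - L * M < L" using s by (auto simp: mult.commute)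
      with s show ?thesis by (intro UnI2 image_eqI[of _ _ "s - L * M"]) auto
    qed (use s in simp)
  qed (auto simp: mult.commute)
  moreover have "card ?block = card {s. s < L \<and> P (L * M + s)}"
    by (rule card_image) (simp add: inj_on_def)
  moreover have "{s. s < M * L \<and> P s} \<inter> ?block = {}" by (auto simp: mult.commute)
  ultimately have "card {s. s < Suc M * L \<and> P s}
                     = card {s. s < M * L \<and> P s} + card {s. s < L \<and> P (L * M + s)}"
    by (simp add: card_Un_disjoint)
  with Suc show ?case by simp
qed simp

lemma vq_eq_multiplicity:
  assumes "q \<ge> 2"
  shows "vq q n = multiplicity q n"
proof (cases "n = 0")
  case False
  have "\<not> is_unit q" using assms by simp
  then have "(GREATEST k. q ^ k dvd n) = multiplicity q n"
    using False by (intro Greatest_equality) (simp_all add: power_dvd_iff_le_multiplicity)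
  with False show ?thesis by (simp add: vq_def)
qed (simp add: vq_def)

lemma vq_pow_mult_add:
  assumes q: "q \<ge> 2" and i: "0 < i" "i < q ^ J"
  shows "vq q (q ^ J * a + i) = vq q i"
proof -
  let ?k = "multiplicity q i"
  have nonunit: "\<not> is_unit q" and i0: "i \<noteq> 0" using q i by auto
  have "q ^ ?k \<le> i" using i0 by (intro dvd_imp_le multiplicity_dvd) simp
  then have "q ^ ?k < q ^ J" using i(2) by linarith
  then have "?k < J" using q by (simp add: power_less_imp_less_exp)
  then have "q ^ ?k dvd q ^ J * a" "q ^ Suc ?k dvd q ^ J * a"
    by (intro dvd_mult2 le_imp_power_dvd; simp)+
  moreover have "\<not> q ^ Suc ?k dvd i"
    using power_dvd_iff_le_multiplicity[OF i0 nonunit, of "Suc ?k"] by simp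
  ultimately have "multiplicity q (q ^ J * a + i) = ?k"
    using multiplicity_dvd[of q i] by (intro multiplicity_eqI) (simp_all add: dvd_add_right_iff)
  then show ?thesis using q by (simp add: vq_eq_multiplicity)
qed

lemma vq_base_mult:
  assumes "q \<ge> 2" and "b > 0"
  shows "vq q (q * b) = Suc (vq q b)"
  using assms by (simp add: vq_eq_multiplicity multiplicity_times_same)

lemma wq_Suc: "wq q (Suc n) = wq q n + vq q (Suc n)"
  by (simp add: wq_def)

lemma uq_Suc: "uq q (Suc n) = uq q n + wq q (Suc n)"
  by (simp add: uq_def)

lemma wq_pow_mult_add:
  assumes q: "q \<ge> 2" and "s < q ^ J"
  shows "wq q (q ^ J * a + s) = wq q (q ^ J * a) + wq q s"
  using assms(2)
proof (induction s)
  case 0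
  then show ?case by (simp add: wq_def vq_def)
next
  case (Suc s)
  have "vq q (q ^ J * a + Suc s) = vq q (Suc s)"
    using Suc.prems by (intro vq_pow_mult_add[OF q]) simp_all
  with Suc show ?case by (simp add: wq_Suc)
qed

lemma wq_less_base:
  assumes q: "q \<ge> 2" and "s < q"
  shows "wq q s = 0"
proof -
  have "vq q i = 0" if "i \<le> s" for i
    using q that \<open>s < q\<close>
    by (cases "i = 0") (auto simp: vq_eq_multiplicity multiplicity_eq_zero_iff dest: dvd_imp_le)
  then show ?thesis by (simp add: wq_def)
qed

lemma wq_base_mult:
  assumes q: "q \<ge> 2"
  shows "wq q (q * b) = b + wq q b"
proof (induction b)
  case 0
  then show ?case by (simp add: wq_def vq_def)
next
  case (Suc b)
  have "wq q (q * b + (q - 1)) = wq q (q * b)"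
    using wq_pow_mult_add[OF q, of "q - 1" 1 b] wq_less_base[OF q, of "q - 1"] q by simp
  moreover have "q * Suc b = Suc (q * b + (q - 1))" using q by (simp add: algebra_simps)
  ultimately have "wq q (q * Suc b) = wq q (q * b) + vq q (q * Suc b)"
    by (metis wq_Suc)
  moreover have "vq q (q * Suc b) = Suc (vq q (Suc b))" using q by (intro vq_base_mult) simp_all
  ultimately show ?case using Suc by (simp add: wq_Suc)
qed

lemma wq_pow_mult:
  assumes q: "q \<ge> 2"
  shows "wq q (q ^ J * a) = a * (\<Sum>i<J. q ^ i) + wq q a"
proof (induction J)
  case (Suc J)
  have "wq q (q ^ Suc J * a) = q ^ J * a + wq q (q ^ J * a)"
    using wq_base_mult[OF q, of "q ^ J * a"] by (simp add: mult.assoc)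
  with Suc show ?case by (simp add: algebra_simps)
qed simp

lemma uq_base_mult_add:
  assumes q: "q \<ge> 2" and "r < q"
  shows "uq q (q * m + r) = uq q (q * m) + r * wq q (q * m)"
  using assms(2)
proof (induction r)
  case (Suc r)
  have "wq q (q * m + Suc r) = wq q (q * m)"
    using wq_pow_mult_add[OF q, of "Suc r" 1 m] wq_less_base[OF q] Suc.prems by simp
  with Suc show ?case by (simp add: uq_Suc)
qed simp

lemma card_uq_residue_block_ge:
  fixes x :: int
  assumes q: "q \<ge> 2" and d: "d > 0" and coprime: "coprime (wq q (q * m)) d"
  shows "q div d \<le> card {r. r < q \<and> (int (uq q (q * m + r)) + x) mod int d = 0}"
proof -
  define U where "U = int (uq q (q * m)) + x"
  define W where "W = int (wq q (q * m))"
  have "coprime W (int d)" using coprime by (simp add: W_def)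
  then obtain y where y: "[W * y = 1] (mod int d)" using cong_solve_coprime_int by blast
  define r0 where "r0 = nat ((- U * y) mod int d)"
  have r0: "[int r0 = - U * y] (mod int d)" "r0 < d"
    using d by (simp_all add: r0_def cong_def nat_less_iff)
  define f where "f i = i * d + r0" for i
  have "f ` {..<q div d} \<subseteq> {r. r < q \<and> (int (uq q (q * m + r)) + x) mod int d = 0}"
  proof (intro subsetI)
    fix r assume "r \<in> f ` {..<q div d}"
    then obtain i where i: "i < q div d" "r = i * d + r0" unfolding f_def by blast
    have "r < Suc i * d" using i r0 by simp
    also have "\<dots> \<le> q div d * d" using i(1) by (intro mult_right_mono) auto
    also have "\<dots> \<le> q" by simp
    finally have "r < q" .
    have "int (uq q (q * m + r)) + x = U + (int i * int d + int r0) * W"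
      using uq_base_mult_add[OF q \<open>r < q\<close>] i(2) by (simp add: U_def W_def)
    also have "[\<dots> = U + (0 + (- U * y)) * W] (mod int d)"
      using r0(1) by (intro cong_add cong_mult cong_refl) (simp_all add: cong_def)
    also have "U + (0 + (- U * y)) * W = U * (1 - W * y)" by (simp add: algebra_simps)
    also have "[\<dots> = U * (1 - 1)] (mod int d)" by (intro cong_mult cong_diff cong_refl y)
    finally show "r \<in> {r. r < q \<and> (int (uq q (q * m + r)) + x) mod int d = 0}"
      using \<open>r < q\<close> by (simp add: cong_def)
  qed
  then have "card (f ` {..<q div d}) \<le> card {r. r < q \<and> (int (uq q (q * m + r)) + x) mod int d = 0}"
    by (intro card_mono) simp_all
  moreover have "inj_on f {..<q div d}" using d by (intro inj_onI) (simp add: f_def)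
  ultimately show ?thesis by (simp add: card_image)
qed

lemma card_uq_residue_ge:
  fixes x :: int
  assumes q: "q \<ge> 2" and d: "d > 0"
  shows "q div d * card {m. m < N div q \<and> coprime (wq q (q * m)) d}
           \<le> card {n. n < N \<and> (int (uq q n) + x) mod int d = 0}"
proof -
  define P where "P n \<longleftrightarrow> (int (uq q n) + x) mod int d = 0" for n
  define C where "C = {m. m < N div q \<and> coprime (wq q (q * m)) d}"
  have "q div d * card C = (\<Sum>m\<in>C. q div d)" by simp
  also have "\<dots> \<le> (\<Sum>m\<in>C. card {r. r < q \<and> P (q * m + r)})"
    unfolding C_def P_def by (intro sum_mono card_uq_residue_block_ge[OF q d]) simp
  also have "\<dots> \<le> (\<Sum>m<N div q. card {r. r < q \<and> P (q * m + r)})"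
    unfolding C_def by (intro sum_mono2) auto
  also have "\<dots> = card {n. n < N div q * q \<and> P n}"
    by (rule card_less_mult_eq_sum_blocks[symmetric])
  also have "\<dots> \<le> card {n. n < N \<and> P n}"
    by (intro card_mono) (auto intro: less_le_trans[OF _ div_times_less_eq_dividend])
  finally show ?thesis by (simp add: C_def P_def)
qed

definition wq_offset :: "nat \<Rightarrow> nat \<Rightarrow> nat \<Rightarrow> nat" where
  "wq_offset q J a = a * (\<Sum>i\<le>J. q ^ i) + wq q a"

lemma wq_base_mult_pow_add:
  assumes q: "q \<ge> 2" and s: "s < q ^ J"
  shows "wq q (q * (q ^ J * a + s)) = wq_offset q J a + wq q (q * s)"
proof -
  have "q * (q ^ J * a + s) = q ^ Suc J * a + q * s" by (simp add: algebra_simps)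
  moreover have "q * s < q ^ Suc J" using s q by simp
  ultimately have "wq q (q * (q ^ J * a + s)) = wq q (q ^ Suc J * a) + wq q (q * s)"
    using wq_pow_mult_add[OF q] by presburger
  also have "wq q (q ^ Suc J * a) = wq_offset q J a"
    unfolding wq_pow_mult[OF q] wq_offset_def lessThan_Suc_atMost ..
  finally show ?thesis .
qed

definition residue_count :: "nat \<Rightarrow> nat \<Rightarrow> nat \<Rightarrow> int \<Rightarrow> nat" where
  "residue_count q d J c = card {s. s < q ^ J \<and> [int (wq q (q * s)) = c] (mod int d)}"

definition min_residue_count :: "nat \<Rightarrow> nat \<Rightarrow> nat \<Rightarrow> nat" where
  "min_residue_count q d J = Min (residue_count q d J ` {0..<int d})"

lemma residue_count_cong:
  "[c = c'] (mod int d) \<Longrightarrow> residue_count q d J c = residue_count q d J c'"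
  unfolding residue_count_def by (metis (no_types, lifting) cong_sym cong_trans)

lemma residue_count_block:
  assumes "q \<ge> 2"
  shows "card {s. s < q ^ J \<and> [int (wq q (q * (q ^ J * a + s))) = c] (mod int d)}
           = residue_count q d J (c - int (wq_offset q J a))"
proof -
  have "[int (wq q (q * (q ^ J * a + s))) = c] (mod int d)
          \<longleftrightarrow> [int (wq q (q * s)) = c - int (wq_offset q J a)] (mod int d)" if "s < q ^ J" for s
    using wq_base_mult_pow_add[OF assms that] by (simp add: cong_iff_dvd_diff algebra_simps)
  then show ?thesis unfolding residue_count_def by (metis (lifting))
qed

context
  fixes q d :: nat
  assumes q: "q \<ge> 2" and d: "0 < d"
begin

lemma min_residue_count_le: "min_residue_count q d J \<le> residue_count q d J c"
proof -
  have "residue_count q d J c = residue_count q d J (c mod int d)"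
    by (rule residue_count_cong) (simp add: cong_def)
  moreover have "c mod int d \<in> {0..<int d}" using d by simp
  ultimately show ?thesis unfolding min_residue_count_def by simp
qed

lemma min_residue_count_attained: "\<exists>c. min_residue_count q d J = residue_count q d J c"
proof -
  have "min_residue_count q d J \<in> residue_count q d J ` {0..<int d}"
    unfolding min_residue_count_def using d by (intro Min_in) auto
  then show ?thesis by blast
qed

lemma sum_residue_count: "(\<Sum>c\<in>{0..<int d}. residue_count q d J c) = q ^ J"
proof -
  let ?S = "\<lambda>c. {s. s < q ^ J \<and> [int (wq q (q * s)) = c] (mod int d)}"
  have "(\<Sum>c\<in>{0..<int d}. card (?S c)) = card (\<Union>c\<in>{0..<int d}. ?S c)"
    by (rule card_UN_disjoint[symmetric]) (auto simp: cong_def)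
  also have "(\<Union>c\<in>{0..<int d}. ?S c) = {..<q ^ J}"
  proof (intro equalityI subsetI)
    fix s assume "s \<in> {..<q ^ J}"
    moreover have "int (wq q (q * s)) mod int d \<in> {0..<int d}" using d by simp
    ultimately show "s \<in> (\<Union>c\<in>{0..<int d}. ?S c)" by (auto simp: cong_def)
  qed auto
  finally show ?thesis by (simp add: residue_count_def)
qed

lemma card_residue_class_blocks:
  "card {m. m < K * q ^ J \<and> [int (wq q (q * m)) = c] (mod int d)}
     = (\<Sum>a<K. residue_count q d J (c - int (wq_offset q J a)))"
  by (simp add: card_less_mult_eq_sum_blocks residue_count_block[OF q])

lemma card_residue_class_ge:
  "K * min_residue_count q d J \<le> card {m. m < K * q ^ J \<and> [int (wq q (q * m)) = c] (mod int d)}"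
proof -
  have "K * min_residue_count q d J = (\<Sum>a<K. min_residue_count q d J)" by simp
  also have "\<dots> \<le> (\<Sum>a<K. residue_count q d J (c - int (wq_offset q J a)))"
    by (intro sum_mono min_residue_count_le)
  finally show ?thesis by (simp add: card_residue_class_blocks)
qed

lemma card_coprime_wq_ge:
  "(M div q ^ J) * totient d * min_residue_count q d J \<le> card {m. m < M \<and> coprime (wq q (q * m)) d}"
proof -
  define K where "K = M div q ^ J"
  define F where "F r = {m. m < K * q ^ J \<and> [int (wq q (q * m)) = int r] (mod int d)}" for r
  have "(\<Sum>r\<in>totatives d. K * min_residue_count q d J) \<le> (\<Sum>r\<in>totatives d. card (F r))"
    unfolding F_def by (intro sum_mono card_residue_class_ge)
  also have "\<dots> = card (\<Union>r\<in>totatives d. F r)"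
  proof (rule card_UN_disjoint[symmetric])
    show "\<forall>r\<in>totatives d. \<forall>r'\<in>totatives d. r \<noteq> r' \<longrightarrow> F r \<inter> F r' = {}"
    proof (intro ballI impI)
      fix r r' assume r: "r \<in> totatives d" "r' \<in> totatives d" "r \<noteq> r'"
      show "F r \<inter> F r' = {}"
      proof (rule ccontr)
        assume "F r \<inter> F r' \<noteq> {}"
        then have "[int r = int r'] (mod int d)" unfolding F_def by (auto intro: cong_trans cong_sym)
        then have "[r = r'] (mod d)" by (simp add: cong_int_iff)
        moreover have "d > 1" using r d by (cases "d = 1") auto
        ultimately show False using r totatives_less cong_less_modulus_unique_nat by blast
      qed
    qed
  qed (simp_all add: F_def)
  also have "\<dots> \<le> card {m. m < M \<and> coprime (wq q (q * m)) d}"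
  proof (intro card_mono subsetI)
    fix m assume "m \<in> (\<Union>r\<in>totatives d. F r)"
    then obtain r where r: "coprime r d" "m < K * q ^ J" "[wq q (q * m) = r] (mod d)"
      unfolding F_def by (auto simp: in_totatives_iff cong_int_iff)
    have "K * q ^ J \<le> M" unfolding K_def by simp
    moreover have "coprime (wq q (q * m)) d" using r(1,3) by (metis cong_imp_coprime cong_sym)
    ultimately show "m \<in> {m. m < M \<and> coprime (wq q (q * m)) d}" using r(2) by simp
  qed simp
  finally show ?thesis by (simp add: K_def totient_def mult_ac)
qed

lemma wq_offset_surj:
  assumes "d \<le> q"
  shows "\<exists>a<q\<^sup>2. [int (wq_offset q J a) = r] (mod int d)"
proof -
  \<comment> \<open>Since wq q (q * t + e) = t for digits t, e < q, the offset of q * t + e is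
    e * g + t * (q * g + 1) with g = 1 + q + ... + q ^ J; take t \<equiv> r and e \<equiv> -q * r.\<close>
  define g where "g = int (\<Sum>i\<le>J. q ^ i)"
  define t where "t = nat (r mod int d)"
  define e where "e = nat ((- int q * r) mod int d)"
  have "t < d" "e < d" using d by (simp_all add: t_def e_def nat_less_iff)
  then have t: "t < q" "[int t = r] (mod int d)" and e: "e < q" "[int e = - int q * r] (mod int d)"
    using d assms unfolding t_def e_def cong_def by auto
  have "q * t + e < q * (q - 1) + q" using t(1) e(1) by (intro add_le_less_mono) simp_all
  also have "\<dots> = q\<^sup>2" using q by (simp add: power2_eq_square algebra_simps)
  finally have bound: "q * t + e < q\<^sup>2" .
  have "wq q (q * t + e) = wq q (q * t)"
    using wq_pow_mult_add[OF q, of e 1 t] wq_less_base[OF q e(1)] e(1) by simp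
  also have "\<dots> = t" using wq_base_mult[OF q] wq_less_base[OF q t(1)] by simp
  finally have "int (wq_offset q J (q * t + e)) = int e * g + int t * (int q * g + 1)"
    by (simp add: wq_offset_def g_def algebra_simps)
  also have "[\<dots> = (- int q * r) * g + r * (int q * g + 1)] (mod int d)"
    using t e by (intro cong_add cong_mult cong_refl)
  also have "(- int q * r) * g + r * (int q * g + 1) = r" by (simp add: algebra_simps)
  finally show ?thesis using bound by blast
qed

lemma sum_shifted_residue_count_ge:
  assumes "d \<le> q"
  shows "q ^ J + (q\<^sup>2 - d) * min_residue_count q d J
           \<le> (\<Sum>a<q\<^sup>2. residue_count q d J (c - int (wq_offset q J a)))"
proof -
  let ?D = "residue_count q d J" and ?\<mu> = "min_residue_count q d J"
  \<comment> \<open>Choose d blocks a < q^2 whose offsets cover each residue class once; together they contain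
    exactly q ^ J elements, and every other block contributes at least the minimum.\<close>
  define f where "f a = ?D (c - int (wq_offset q J a))" for a
  have "\<forall>r. \<exists>a. a < q\<^sup>2 \<and> [int (wq_offset q J a) = c - r] (mod int d)"
    using wq_offset_surj[OF assms] by blast
  then obtain h where h: "\<And>r. h r < q\<^sup>2 \<and> [int (wq_offset q J (h r)) = c - r] (mod int d)"
    by (meson choice)
  have inj: "inj_on h {0..<int d}"
  proof (rule inj_onI)
    fix r r' assume "r \<in> {0..<int d}" "r' \<in> {0..<int d}" "h r = h r'"
    moreover from h[of r] h[of r'] \<open>h r = h r'\<close> have "[c - r = c - r'] (mod int d)"
      by (metis cong_sym cong_trans)
    then have "[r = r'] (mod int d)" by (simp add: cong_iff_dvd_diff dvd_diff_commute)
    ultimately show "r = r'" by (simp add: cong_def)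
  qed
  define S where "S = h ` {0..<int d}"
  have S: "S \<subseteq> {..<q\<^sup>2}" "card S = d" using h inj by (auto simp: S_def card_image)
  have "(\<Sum>a\<in>S. f a) = (\<Sum>r\<in>{0..<int d}. f (h r))"
    unfolding S_def by (rule sum.reindex[OF inj, unfolded comp_def])
  also have "\<dots> = (\<Sum>r\<in>{0..<int d}. ?D r)"
  proof (rule sum.cong[OF refl])
    fix r
    have "[c - int (wq_offset q J (h r)) = c - (c - r)] (mod int d)"
      using h[of r] by (intro cong_diff cong_refl) simp
    then show "f (h r) = ?D r" unfolding f_def by (simp add: residue_count_cong)
  qed
  also have "\<dots> = q ^ J" by (rule sum_residue_count)
  finally have on_S: "(\<Sum>a\<in>S. f a) = q ^ J" .
  have "(q\<^sup>2 - d) * ?\<mu> = (\<Sum>a\<in>{..<q\<^sup>2} - S. ?\<mu>)"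
    using S by (simp add: card_Diff_subset finite_subset)
  also have "\<dots> \<le> (\<Sum>a\<in>{..<q\<^sup>2} - S. f a)"
    unfolding f_def by (intro sum_mono min_residue_count_le)
  finally have "q ^ J + (q\<^sup>2 - d) * ?\<mu> \<le> (\<Sum>a\<in>S. f a) + (\<Sum>a\<in>{..<q\<^sup>2} - S. f a)"
    using on_S by simp
  also have "\<dots> = (\<Sum>a<q\<^sup>2. f a)"
    using S by (subst sum.subset_diff[of S]) auto
  finally show ?thesis by (simp add: f_def)
qed

lemma min_residue_count_add2:
  assumes "d \<le> q"
  shows "q ^ J + (q\<^sup>2 - d) * min_residue_count q d J \<le> min_residue_count q d (J + 2)"
proof -
  obtain c where c: "min_residue_count q d (J + 2) = residue_count q d (J + 2) c"
    using min_residue_count_attained by blast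
  have "q ^ (J + 2) = q\<^sup>2 * q ^ J" by (simp add: power_add power2_eq_square)
  then have "residue_count q d (J + 2) c = (\<Sum>a<q\<^sup>2. residue_count q d J (c - int (wq_offset q J a)))"
    by (simp only: residue_count_def[of q d "J + 2"] card_residue_class_blocks)
  with c sum_shifted_residue_count_ge[OF assms] show ?thesis by simp
qed

lemma min_residue_count_lower:
  assumes dq: "d \<le> q"
  shows "real q ^ (2 * i) * (1 - (1 - d / q\<^sup>2) ^ i) / d \<le> min_residue_count q d (2 * i)"
proof (induction i)
  case (Suc i)
  define \<kappa> :: real where "\<kappa> = 1 - d / q\<^sup>2"
  let ?\<mu> = "min_residue_count q d"
  have "d \<le> q\<^sup>2" using dq q by (simp add: power2_eq_square) (metis le_trans le_square)
  have "real (q ^ (2 * i) + (q\<^sup>2 - d) * ?\<mu> (2 * i)) \<le> real (?\<mu> (2 * i + 2))"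
    using min_residue_count_add2[OF dq] by (simp only: of_nat_le_iff)
  then have rec: "real q ^ (2 * i) + (real q ^ 2 - d) * ?\<mu> (2 * i) \<le> ?\<mu> (2 * Suc i)"
    using \<open>d \<le> q\<^sup>2\<close> by (simp add: of_nat_diff)
  have "real q ^ 2 * \<kappa> = real q ^ 2 - d" using q by (simp add: \<kappa>_def right_diff_distrib)
  then have "real q ^ 2 * (1 - \<kappa> ^ Suc i) = real q ^ 2 - (real q ^ 2 - d) * \<kappa> ^ i"
    by (simp add: right_diff_distrib mult.assoc[symmetric])
  then have "real q ^ (2 * Suc i) * (1 - \<kappa> ^ Suc i) / d
               = real q ^ (2 * i) * (real q ^ 2 - (real q ^ 2 - d) * \<kappa> ^ i) / d"
    by (simp add: power_add power2_eq_square mult.assoc)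
  also have "\<dots> = real q ^ (2 * i) + (real q ^ 2 - d) * (real q ^ (2 * i) * (1 - \<kappa> ^ i) / d)"
    using d by (simp add: field_simps)
  also have "\<dots> \<le> real q ^ (2 * i) + (real q ^ 2 - d) * ?\<mu> (2 * i)"
    using Suc \<open>d \<le> q\<^sup>2\<close> unfolding \<kappa>_def
    by (intro add_left_mono mult_left_mono) (simp_all flip: of_nat_power)
  also have "\<dots> \<le> ?\<mu> (2 * Suc i)" by (rule rec)
  finally show ?case unfolding \<kappa>_def .
qed simp


lemma min_residue_count_le_average: "d * min_residue_count q d J \<le> q ^ J"
proof -
  have "d * min_residue_count q d J = (\<Sum>c\<in>{0..<int d}. min_residue_count q d J)" by simp
  also have "\<dots> \<le> (\<Sum>c\<in>{0..<int d}. residue_count q d J c)"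
    by (intro sum_mono min_residue_count_le)
  finally show ?thesis by (simp add: sum_residue_count)
qed

lemma min_residue_count_density_tendsto:
  assumes dq: "d \<le> q"
  shows "(\<lambda>i. min_residue_count q d (2 * i) / real q ^ (2 * i)) \<longlonglongrightarrow> 1 / d"
proof (rule real_tendsto_sandwich)
  define \<kappa> :: real where "\<kappa> = 1 - d / q\<^sup>2"
  have "d \<le> q\<^sup>2" using dq by (simp add: power2_eq_square) (metis le_trans le_square)
  then have "real d / q\<^sup>2 \<le> 1" using q by (simp flip: of_nat_power)
  moreover have "0 < real d / q\<^sup>2" using d q by simp
  ultimately have "\<bar>\<kappa>\<bar> < 1" unfolding \<kappa>_def by linarith
  then show "(\<lambda>i. (1 - \<kappa> ^ i) / d) \<longlonglongrightarrow> 1 / d"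
    using d by (auto intro!: tendsto_eq_intros LIMSEQ_power_zero)
  show "\<forall>\<^sub>F i in sequentially. (1 - \<kappa> ^ i) / d \<le> min_residue_count q d (2 * i) / real q ^ (2 * i)"
    using min_residue_count_lower[OF dq] q by (simp add: \<kappa>_def field_simps)
  show "\<forall>\<^sub>F i in sequentially. min_residue_count q d (2 * i) / real q ^ (2 * i) \<le> 1 / d"
    using min_residue_count_le_average d q by (simp add: field_simps flip: of_nat_mult of_nat_power)
qed (rule tendsto_const)

end

lemma liminf_ratio_ge:
  fixes c :: "nat \<Rightarrow> nat" and K L :: nat
  assumes L: "L > 0" and c: "\<And>N. K * (N div L) \<le> c N"
  shows "ereal (K / L) \<le> liminf (\<lambda>N. ereal (c N / N))"
proof -
  have "ereal (K / L - K / N) \<le> ereal (c N / N)" if "N \<ge> 1" for N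
  proof -
    have "real (N div L) = of_int \<lfloor>real N / L\<rfloor>" by (simp add: floor_divide_of_nat_eq)
    then have "real N / L - 1 < real (N div L)" by simp
    then have "K * (real N / L - 1) \<le> K * real (N div L)" by (intro mult_left_mono) simp_all
    also have "\<dots> \<le> c N" using c[of N] by (simp flip: of_nat_mult)
    finally have "K * (real N / L - 1) / N \<le> c N / N" by (rule divide_right_mono) simp
    moreover have "K * (real N / L - 1) / N = K / L - K / N" using that L by (simp add: field_simps)
    ultimately show ?thesis by simp
  qed
  then have "liminf (\<lambda>N. ereal (K / L - K / N)) \<le> liminf (\<lambda>N. ereal (c N / N))"
    by (intro Liminf_mono eventually_sequentiallyI[of 1])
  moreover have "(\<lambda>N. ereal (K / L - K / N)) \<longlonglongrightarrow> ereal (K / L - 0)"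
    by (intro tendsto_ereal tendsto_diff tendsto_const lim_const_over_n)
  ultimately show ?thesis by (simp add: lim_imp_Liminf)
qed

lemma liminf_uq_residue_density_ge:
  fixes x :: int
  assumes q: "q \<ge> 2" and d: "d > 0"
  shows "ereal (real (q div d) * totient d / q * (min_residue_count q d J / real q ^ J))
           \<le> liminf (\<lambda>N. ereal (real (card {n. n < N \<and> (int (uq q n) + x) mod int d = 0}) / real N))"
proof -
  let ?count = "\<lambda>N. card {n. n < N \<and> (int (uq q n) + x) mod int d = 0}"
  let ?\<mu> = "min_residue_count q d J"
  have "q div d * totient d * ?\<mu> * (N div (q * q ^ J)) \<le> ?count N" for N
  proof -
    have "q div d * totient d * ?\<mu> * (N div (q * q ^ J)) = q div d * (N div q div q ^ J * totient d * ?\<mu>)"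
      by (simp add: div_mult2_eq mult_ac)
    also have "\<dots> \<le> q div d * card {m. m < N div q \<and> coprime (wq q (q * m)) d}"
      by (intro mult_left_mono card_coprime_wq_ge[OF q d]) simp
    also have "\<dots> \<le> ?count N" by (rule card_uq_residue_ge[OF q d])
    finally show ?thesis .
  qed
  then have "ereal (real (q div d * totient d * ?\<mu>) / real (q * q ^ J)) \<le> liminf (\<lambda>N. ereal (?count N / N))"
    using q by (intro liminf_ratio_ge) simp_all
  moreover have "real (q div d * totient d * ?\<mu>) / real (q * q ^ J)
                   = real (q div d) * totient d / q * (?\<mu> / real q ^ J)"
    by simp
  ultimately show ?thesis by simp
qed

theorem proposition4p1:
  fixes d q :: nat and x :: int
  assumes "d > 0" and "q \<ge> 2"
  shows "liminf (\<lambda>N. ereal (real (card {n. n < N \<and> (int (uq q n) + x) mod int d = 0}) / real N))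
           \<ge> ereal (real (totient d) / (real d * real q) * real (q div d))"
proof (cases "d \<le> q")
  case False
  then show ?thesis by (simp add: Liminf_bounded)
next
  case True
  define A where "A = real (q div d) * totient d / q"
  have "(\<lambda>i. ereal (A * (min_residue_count q d (2 * i) / real q ^ (2 * i)))) \<longlonglongrightarrow> ereal (A * (1 / d))"
    using min_residue_count_density_tendsto[OF assms(2,1) True] by (intro tendsto_ereal tendsto_mult_left)
  then have "ereal (A * (1 / d))
               \<le> liminf (\<lambda>N. ereal (real (card {n. n < N \<and> (int (uq q n) + x) mod int d = 0}) / real N))"
    using liminf_uq_residue_density_ge[OF assms(2,1)] LIMSEQ_le_const2 unfolding A_def by blast
  then show ?thesis by (simp add: A_def mult_ac)
qed

end
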